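(* Let $V$ be an $n$-dimensional complex vector space, $\Lambda(V\otimes V^* )$ the exterior algebra on $V\otimes V^*$, and $X=(x_{ij})_{1\le i,j\le n}\in\operatorname{Mat}_{n,n}(\Lambda(V\otimes V^* ))$. Then $X^{2n}=0$.
   Context: $e_1,\ldots,e_n$ is a basis of $V$, $e_i^*$ its dual basis, $x_{ij}=e_i\otimes e_j^*$ is the standard basis of $V\otimes V^*$. Products in the exterior algebra are wedge products; matrix products are taken with entries multiplied in the order written. *)

theory Defs
  imports Complex_Main "HOL-Library.Product_Lexorder"
begin

text \<open>An element is represented by its coordinates in the monomial basis
e_S = e_{s1} wedge ... wedge e_{sk} (s1 < ... < sk), S a finite set of generators; i.e. as a
function from finite sets of generators to complex coefficients.\<close>

type_synonym 'g ext = "'g set \<Rightarrow> complex"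

definition ext_sign :: "'g::linorder set \<Rightarrow> 'g set \<Rightarrow> complex" where
  "ext_sign S T = (-1) ^ card {(s, t). s \<in> S \<and> t \<in> T \<and> t < s}"

text \<open>Wedge product: e_S wedge e_T = sign(S,T) e_{S union T} if S, T disjoint, else 0.\<close>
definition ext_mult :: "'g::linorder ext \<Rightarrow> 'g ext \<Rightarrow> 'g ext" where
  "ext_mult a b = (\<lambda>U. \<Sum>S\<in>Pow U. ext_sign S (U - S) * a S * b (U - S))"

definition ext_add :: "'g ext \<Rightarrow> 'g ext \<Rightarrow> 'g ext" where
  "ext_add a b = (\<lambda>U. a U + b U)"

definition ext_zero :: "'g ext" where
  "ext_zero = (\<lambda>_. 0)"

definition ext_one :: "'g ext" where
  "ext_one = (\<lambda>U. if U = {} then 1 else 0)"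

definition ext_gen :: "'g \<Rightarrow> 'g ext" where
  "ext_gen g = (\<lambda>U. if U = {g} then 1 else 0)"

text \<open>n x n matrices over the exterior algebra, indices 0..n-1; the matrix product multiplies
entries in the order written.\<close>
definition ext_mat_mult :: "nat \<Rightarrow> (nat \<Rightarrow> nat \<Rightarrow> 'g::linorder ext) \<Rightarrow> (nat \<Rightarrow> nat \<Rightarrow> 'g ext)
    \<Rightarrow> (nat \<Rightarrow> nat \<Rightarrow> 'g ext)" where
  "ext_mat_mult n A B = (\<lambda>i k. foldr ext_add (map (\<lambda>j. ext_mult (A i j) (B j k)) [0..<n]) ext_zero)"

definition ext_mat_one :: "nat \<Rightarrow> nat \<Rightarrow> 'g ext" where
  "ext_mat_one = (\<lambda>i j. if i = j then ext_one else ext_zero)"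

primrec ext_mat_pow :: "nat \<Rightarrow> (nat \<Rightarrow> nat \<Rightarrow> 'g::linorder ext) \<Rightarrow> nat \<Rightarrow> (nat \<Rightarrow> nat \<Rightarrow> 'g ext)" where
  "ext_mat_pow n A 0 = ext_mat_one"
| "ext_mat_pow n A (Suc k) = ext_mat_mult n (ext_mat_pow n A k) A"

text \<open>The generic matrix X = (x_ij), x_ij = e_i tensor e_j^* as generator (i,j) of
Lambda(V tensor V^*).\<close>
definition generic_X :: "nat \<Rightarrow> nat \<Rightarrow> (nat \<times> nat) ext" where
  "generic_X i j = ext_gen (i, j)"

end

theory Submission
  imports Defs "Jordan_Normal_Form.Char_Poly"
begin

text \<open>This is Rosset's argument. The entries \<open>x\<^sub>i\<^sub>j\<close> anticommute, so the entries of
  \<open>Y = X\<^sup>2\<close> lie in the even part of the exterior algebra, a commutative \<open>\<complex>\<close>-algebra.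
  Moving one odd factor around the trace gives \<open>tr (X\<^bsup>2m\<^esup>) = - tr (X\<^bsup>2m\<^esup>)\<close>, so
  \<open>tr (Y\<^sup>m) = 0\<close> for all \<open>m \<ge> 1\<close>. Over a commutative ring without \<open>\<int>\<close>-torsion,
  Newton's identities then force the characteristic polynomial of \<open>Y\<close> to be \<open>t\<^sup>n\<close>, and
  Cayley--Hamilton yields \<open>X\<^bsup>2n\<^esup> = Y\<^sup>n = 0\<close>. Both are read off from the coefficients
  \<open>B\<^sub>k\<close> of \<open>adj (t I - Y) = \<Sum>\<^sub>k B\<^sub>k t\<^sup>k\<close>: the identity \<open>adj (t I - Y) (t I - Y) = \<chi>(t) I\<close>
  gives \<open>B\<^sub>k = c\<^bsub>k+1\<^esub> I + B\<^bsub>k+1\<^esub> Y\<close>, and Jacobi's formula gives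
  \<open>tr B\<^sub>k = (k + 1) c\<^bsub>k+1\<^esub>\<close>.\<close>

section \<open>Derivatives of polynomials over commutative rings\<close>

text \<open>The library's \<open>pderiv\<close> requires a ring without zero divisors; the even part of an
  exterior algebra has nilpotents.\<close>

function poly_deriv :: "'a::comm_ring_1 poly \<Rightarrow> 'a poly" where
  "poly_deriv (pCons a p) = (if p = 0 then 0 else p + pCons 0 (poly_deriv p))"
  by (auto intro: pCons_cases)

termination
  by (relation "measure degree") simp_all

declare poly_deriv.simps [simp del]

lemma poly_deriv_0 [simp]: "poly_deriv 0 = 0"
  using poly_deriv.simps [of 0 0] by simp

lemma poly_deriv_pCons: "poly_deriv (pCons a p) = p + pCons 0 (poly_deriv p)"
  by (simp add: poly_deriv.simps)

lemma coeff_poly_deriv: "coeff (poly_deriv p) k = of_nat (Suc k) * coeff p (Suc k)"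
  by (induction p arbitrary: k)
    (auto simp: poly_deriv_pCons coeff_pCons algebra_simps split: nat.split)

lemma poly_deriv_add: "poly_deriv (p + q) = poly_deriv p + poly_deriv q"
  by (rule poly_eqI) (simp add: coeff_poly_deriv algebra_simps)

lemma poly_deriv_const [simp]: "poly_deriv [:a:] = 0"
  by (rule poly_eqI) (simp add: coeff_poly_deriv coeff_pCons split: nat.split)

lemma poly_deriv_1 [simp]: "poly_deriv 1 = 0"
  by (simp add: one_pCons)

lemma poly_deriv_smult: "poly_deriv (Polynomial.smult a p) = Polynomial.smult a (poly_deriv p)"
  by (rule poly_eqI) (simp add: coeff_poly_deriv algebra_simps)

lemma poly_deriv_mult: "poly_deriv (p * q) = p * poly_deriv q + q * poly_deriv p"
  by (induction p) (simp_all add: poly_deriv_pCons poly_deriv_add poly_deriv_smult algebra_simps)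

lemma poly_deriv_sum: "poly_deriv (\<Sum>x\<in>A. f x) = (\<Sum>x\<in>A. poly_deriv (f x))"
  by (induction A rule: infinite_finite_induct) (simp_all add: poly_deriv_add)

lemma poly_deriv_prod:
  "poly_deriv (\<Prod>x\<in>A. f x) = (\<Sum>a\<in>A. (\<Prod>x\<in>A - {a}. f x) * poly_deriv (f a))"
proof (induction A rule: infinite_finite_induct)
  case (insert a A)
  have "(\<Prod>x\<in>insert a A - {b}. f x) = f a * (\<Prod>x\<in>A - {b}. f x)" if "b \<in> A" for b
  proof -
    have "insert a A - {b} = insert a (A - {b})" using insert.hyps that by auto
    then show ?thesis using insert.hyps by simp
  qed
  then show ?case
    using insert by (simp add: poly_deriv_mult sum_distrib_left algebra_simps)
qed simp_all

lemma poly_deriv_of_int_mult: "poly_deriv (of_int k * p) = of_int k * poly_deriv p"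
  by (simp add: of_int_poly poly_deriv_smult)

text \<open>Jacobi's formula \<open>(det A)' = \<Sum>\<^sub>i\<^sub>j A\<^sub>i\<^sub>j' cof\<^sub>i\<^sub>j(A)\<close>: differentiating the
  Leibniz expansion differentiates one row at a time, and the matrix with row \<open>i\<close> differentiated
  is expanded along that row.\<close>

lemma poly_deriv_det:
  assumes A: "A \<in> carrier_mat n n"
  shows "poly_deriv (det A) = (\<Sum>i<n. \<Sum>j<n. poly_deriv (A $$ (i, j)) * cofactor A i j)"
proof -
  define D where "D i = mat n n (\<lambda>(r, j). if r = i then poly_deriv (A $$ (r, j)) else A $$ (r, j))"
    for i
  have D: "D i \<in> carrier_mat n n" for i by (simp add: D_def)
  have "poly_deriv (det A) =
      (\<Sum>p | p permutes {0..<n}. \<Sum>i<n. signof p * ((\<Prod>r\<in>{0..<n} - {i}. A $$ (r, p r)) *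
         poly_deriv (A $$ (i, p i))))"
    unfolding det_def'[OF A] poly_deriv_sum
    by (simp add: poly_deriv_of_int_mult poly_deriv_prod sum_distrib_left atLeast0LessThan)
  also have "\<dots> = (\<Sum>i<n. det (D i))"
  proof (subst sum.swap, rule sum.cong[OF refl])
    fix i assume "i \<in> {..<n}"
    then have "i \<in> {0..<n}" by simp
    then show "(\<Sum>p | p permutes {0..<n}. signof p * ((\<Prod>r\<in>{0..<n} - {i}. A $$ (r, p r)) *
         poly_deriv (A $$ (i, p i)))) = det (D i)"
      unfolding det_def'[OF D]
      by (intro sum.cong refl arg_cong2[where f = "(*)"])
        (auto simp: prod.remove[of "{0..<n}" i] D_def mult.commute permutes_in_image
          intro!: prod.cong)
  qed
  also have "\<dots> = (\<Sum>i<n. \<Sum>j<n. poly_deriv (A $$ (i, j)) * cofactor A i j)"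
  proof (rule sum.cong[OF refl])
    fix i assume i: "i \<in> {..<n}"
    have "mat_delete (D i) i j = mat_delete A i j" for j
      using A by (intro eq_matI) (auto simp: mat_delete_def D_def)
    then show "det (D i) = (\<Sum>j<n. poly_deriv (A $$ (i, j)) * cofactor A i j)"
      using i A by (subst laplace_expansion_row[OF D, of i]) (auto simp: cofactor_def D_def)
  qed
  finally show ?thesis .
qed

section \<open>Newton's identities and nilpotency\<close>

definition mat_trace :: "'a::comm_ring_1 mat \<Rightarrow> 'a" where
  "mat_trace A = (\<Sum>i<dim_row A. A $$ (i, i))"

lemma mat_trace_add:
  "A \<in> carrier_mat n n \<Longrightarrow> B \<in> carrier_mat n n \<Longrightarrow> mat_trace (A + B) = mat_trace A + mat_trace B"
  by (simp add: mat_trace_def sum.distrib)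

lemma mat_trace_smult_one: "mat_trace (c \<cdot>\<^sub>m 1\<^sub>m n) = of_nat n * c"
  by (simp add: mat_trace_def)

lemma mat_trace_smult: "A \<in> carrier_mat n n \<Longrightarrow> mat_trace (c \<cdot>\<^sub>m A) = c * mat_trace A"
  by (simp add: mat_trace_def sum_distrib_left)

lemma pow_mat_Suc_left: "A \<in> carrier_mat n n \<Longrightarrow> A ^\<^sub>m Suc k = A * A ^\<^sub>m k"
proof (induction k)
  case (Suc k)
  then have "A ^\<^sub>m Suc (Suc k) = (A * A ^\<^sub>m k) * A" by simp
  also have "\<dots> = A * (A ^\<^sub>m k * A)" using Suc.prems by (intro assoc_mult_mat) auto
  finally show ?case by simp
qed simp

lemma dim_char_poly_matrix [simp]:
  "dim_row (char_poly_matrix A) = dim_row A" "dim_col (char_poly_matrix A) = dim_col A"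
  unfolding char_poly_matrix_def by simp_all

definition adj_char_coeff :: "'a::comm_ring_1 mat \<Rightarrow> nat \<Rightarrow> 'a mat" where
  "adj_char_coeff A k = map_mat (\<lambda>p. coeff p k) (adj_mat (char_poly_matrix A))"

lemma dim_adj_char_coeff [simp]:
  "dim_row (adj_char_coeff A k) = dim_row A" "dim_col (adj_char_coeff A k) = dim_col A"
  by (simp_all add: adj_char_coeff_def adj_mat_def)

lemma index_adj_char_coeff:
  "A \<in> carrier_mat n n \<Longrightarrow> i < n \<Longrightarrow> j < n \<Longrightarrow>
    adj_char_coeff A k $$ (i, j) = coeff (adj_mat (char_poly_matrix A) $$ (i, j)) k"
  by (simp add: adj_char_coeff_def adj_mat_def)

lemma adj_char_coeff_carrier [simp]: "A \<in> carrier_mat n n \<Longrightarrow> adj_char_coeff A k \<in> carrier_mat n n"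
  using adj_mat(1)[OF char_poly_matrix_closed] by (simp add: adj_char_coeff_def)

lemma char_poly_matrix_index:
  "A \<in> carrier_mat n n \<Longrightarrow> i < n \<Longrightarrow> j < n \<Longrightarrow>
    char_poly_matrix A $$ (i, j) = (if i = j then [:0, 1:] else 0) + [:- A $$ (i, j):]"
  by (simp add: char_poly_matrix_def)

lemma coeff_mult_char_poly_matrix:
  assumes P: "P \<in> carrier_mat m n" and A: "A \<in> carrier_mat n n" and i: "i < m" and l: "l < n"
  shows "coeff ((P * char_poly_matrix A) $$ (i, l)) k =
    (if k = 0 then 0 else coeff (P $$ (i, l)) (k - 1)) - (map_mat (\<lambda>p. coeff p k) P * A) $$ (i, l)"
proof -
  have "(P * char_poly_matrix A) $$ (i, l) =
      (\<Sum>j<n. P $$ (i, j) * (if j = l then [:0, 1:] else 0)) -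
      (\<Sum>j<n. Polynomial.smult (A $$ (j, l)) (P $$ (i, j)))"
    using P A i l
    by (auto simp: scalar_prod_def atLeast0LessThan char_poly_matrix_index distrib_left
        sum_subtractf[symmetric] intro!: sum.cong)
  also have "(\<Sum>j<n. P $$ (i, j) * (if j = l then [:0, 1:] else 0)) = P $$ (i, l) * [:0, 1:]"
    using l by (simp add: if_distrib[of "(*) _"] cong: if_cong)
  finally show ?thesis
    using P A i l
    by (simp add: coeff_sum coeff_pCons scalar_prod_def atLeast0LessThan mult.commute
        split: nat.split)
qed

lemma adj_char_poly_matrix_mult:
  "A \<in> carrier_mat n n \<Longrightarrow> adj_mat (char_poly_matrix A) * char_poly_matrix A = char_poly A \<cdot>\<^sub>m 1\<^sub>m n"
  using adj_mat(3)[of "char_poly_matrix A" n] by (simp add: char_poly_def)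

lemma adj_char_coeff_Suc:
  assumes A: "A \<in> carrier_mat n n"
  shows "adj_char_coeff A k = coeff (char_poly A) (Suc k) \<cdot>\<^sub>m 1\<^sub>m n + adj_char_coeff A (Suc k) * A"
proof (rule eq_matI)
  fix i l assume "i < dim_row (coeff (char_poly A) (Suc k) \<cdot>\<^sub>m 1\<^sub>m n + adj_char_coeff A (Suc k) * A)"
    and "l < dim_col (coeff (char_poly A) (Suc k) \<cdot>\<^sub>m 1\<^sub>m n + adj_char_coeff A (Suc k) * A)"
  then have i: "i < n" and l: "l < n" using A adj_char_coeff_carrier[OF A] by auto
  have adj: "adj_mat (char_poly_matrix A) \<in> carrier_mat n n"
    using A by (simp add: adj_mat(1))
  from adj_char_poly_matrix_mult[OF A] show "adj_char_coeff A k $$ (i, l) =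
      (coeff (char_poly A) (Suc k) \<cdot>\<^sub>m 1\<^sub>m n + adj_char_coeff A (Suc k) * A) $$ (i, l)"
    using coeff_mult_char_poly_matrix[OF adj A i l, of "Suc k", folded adj_char_coeff_def] i l A
    by (cases "i = l") (simp_all add: index_adj_char_coeff)
qed (use A in auto)

lemma adj_char_coeff_0_mult:
  assumes A: "A \<in> carrier_mat n n"
  shows "adj_char_coeff A 0 * A = - (coeff (char_poly A) 0 \<cdot>\<^sub>m 1\<^sub>m n)"
proof (rule eq_matI)
  fix i l assume "i < dim_row (- (coeff (char_poly A) 0 \<cdot>\<^sub>m 1\<^sub>m n))"
    and "l < dim_col (- (coeff (char_poly A) 0 \<cdot>\<^sub>m 1\<^sub>m n))"
  then have i: "i < n" and l: "l < n" by auto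
  have adj: "adj_mat (char_poly_matrix A) \<in> carrier_mat n n"
    using A by (simp add: adj_mat(1))
  from adj_char_poly_matrix_mult[OF A]
  show "(adj_char_coeff A 0 * A) $$ (i, l) = (- (coeff (char_poly A) 0 \<cdot>\<^sub>m 1\<^sub>m n)) $$ (i, l)"
    using coeff_mult_char_poly_matrix[OF adj A i l, of 0, folded adj_char_coeff_def] i l A
    by (cases "i = l") (simp_all add: index_adj_char_coeff)
qed (use A in auto)

lemma adj_char_coeff_eq_0:
  assumes A: "A \<in> carrier_mat n n" and k: "n \<le> k"
  shows "adj_char_coeff A k = 0\<^sub>m n n"
proof (rule eq_matI)
  fix i j assume "i < dim_row (0\<^sub>m n n :: 'a mat)" "j < dim_col (0\<^sub>m n n :: 'a mat)"
  then have i: "i < n" and j: "j < n" by auto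
  have "degree (det (mat_delete (char_poly_matrix A) j i)) \<le> 1 * (n - 1)"
    using A by (intro degree_det_le[of "n - 1"])
      (auto simp: mat_delete_def char_poly_matrix_def degree_add_le)
  then have "degree (cofactor (char_poly_matrix A) j i) < k"
    using k i by (cases "even (j + i)") (simp_all add: cofactor_def)
  then show "adj_char_coeff A k $$ (i, j) = 0\<^sub>m n n $$ (i, j)"
    using A i j by (simp add: adj_char_coeff_def adj_mat_def coeff_eq_0)
qed (use A in auto)

lemma mat_trace_adj_char_coeff:
  assumes A: "A \<in> carrier_mat n n"
  shows "mat_trace (adj_char_coeff A k) = of_nat (Suc k) * coeff (char_poly A) (Suc k)"
proof -
  let ?M = "char_poly_matrix A"
  have "poly_deriv (char_poly A) = (\<Sum>i<n. \<Sum>j<n. if i = j then cofactor ?M i j else 0)"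
    unfolding char_poly_def poly_deriv_det[OF char_poly_matrix_closed[OF A]]
    using A
    by (intro sum.cong refl) (simp add: char_poly_matrix_index poly_deriv_add poly_deriv_pCons)
  also have "\<dots> = (\<Sum>i<n. cofactor ?M i i)"
    by simp
  finally have "coeff (\<Sum>i<n. cofactor ?M i i) k = coeff (poly_deriv (char_poly A)) k"
    by simp
  then show ?thesis
    using A by (simp add: mat_trace_def adj_char_coeff_def adj_mat_def coeff_sum coeff_poly_deriv)
qed

lemma adj_char_coeff_mult_pow:
  assumes A: "A \<in> carrier_mat n n"
  shows "adj_char_coeff A k * A ^\<^sub>m m =
    coeff (char_poly A) (Suc k) \<cdot>\<^sub>m A ^\<^sub>m m + adj_char_coeff A (Suc k) * A ^\<^sub>m Suc m"
proof -
  have "adj_char_coeff A k * A ^\<^sub>m m =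
      coeff (char_poly A) (Suc k) \<cdot>\<^sub>m 1\<^sub>m n * A ^\<^sub>m m + adj_char_coeff A (Suc k) * A * A ^\<^sub>m m"
    unfolding adj_char_coeff_Suc[OF A, of k]
    by (rule add_mult_distrib_mat[of _ n n]) (use A in auto)
  also have "adj_char_coeff A (Suc k) * A * A ^\<^sub>m m = adj_char_coeff A (Suc k) * (A * A ^\<^sub>m m)"
    by (rule assoc_mult_mat) (use A in auto)
  also have "A * A ^\<^sub>m m = A ^\<^sub>m Suc m"
    by (rule pow_mat_Suc_left[OF A, symmetric])
  also have "coeff (char_poly A) (Suc k) \<cdot>\<^sub>m 1\<^sub>m n * A ^\<^sub>m m = coeff (char_poly A) (Suc k) \<cdot>\<^sub>m A ^\<^sub>m m"
    using A by (simp add: mult_smult_assoc_mat[of _ n n _ n])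
  finally show ?thesis .
qed

lemma mat_trace_adj_char_coeff_mult_pow:
  assumes A: "A \<in> carrier_mat n n" and traces: "\<And>m. m \<ge> 1 \<Longrightarrow> mat_trace (A ^\<^sub>m m) = 0"
    and m: "m \<ge> 1"
  shows "mat_trace (adj_char_coeff A k * A ^\<^sub>m m) = 0"
proof -
  have "\<forall>m\<ge>1. mat_trace (adj_char_coeff A k * A ^\<^sub>m m) = 0" if "k \<le> n" for k
    using that
  proof (induction k rule: inc_induct)
    case base
    then show ?case using A by (simp add: adj_char_coeff_eq_0 mat_trace_def)
  next
    case (step k)
    show ?case
    proof (intro allI impI)
      fix m :: nat assume "m \<ge> 1"
      have "mat_trace (adj_char_coeff A k * A ^\<^sub>m m) =
          coeff (char_poly A) (Suc k) * mat_trace (A ^\<^sub>m m) +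
          mat_trace (adj_char_coeff A (Suc k) * A ^\<^sub>m Suc m)"
        unfolding adj_char_coeff_mult_pow[OF A, of k m]
          mat_trace_smult[OF pow_carrier_mat[OF A], symmetric]
        by (rule mat_trace_add) (use A in auto)
      then show "mat_trace (adj_char_coeff A k * A ^\<^sub>m m) = 0"
        using step.IH traces \<open>m \<ge> 1\<close> by (simp del: pow_mat.simps)
    qed
  qed
  then show ?thesis
    using A m by (cases "k \<le> n") (simp_all add: adj_char_coeff_eq_0 mat_trace_def)
qed

lemma char_poly_eq_monom_if_traces_vanish:
  fixes A :: "'a::comm_ring_1 mat"
  assumes A: "A \<in> carrier_mat n n"
    and torsion_free: "\<And>m (x::'a). m \<noteq> 0 \<Longrightarrow> of_nat m * x = 0 \<Longrightarrow> x = 0"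
    and traces: "\<And>m. m \<ge> 1 \<Longrightarrow> mat_trace (A ^\<^sub>m m) = 0"
  shows "char_poly A = monom 1 n"
proof (rule poly_eqI)
  fix k
  let ?c = "coeff (char_poly A)"
  have trace_adj_mult: "mat_trace (adj_char_coeff A k * A) = 0" for k
    using mat_trace_adj_char_coeff_mult_pow[OF A traces, of 1 k] A by simp
  have scale: "of_nat (Suc k) * ?c (Suc k) = of_nat n * ?c (Suc k)" for k
  proof -
    have "of_nat (Suc k) * ?c (Suc k) = mat_trace (adj_char_coeff A k)"
      by (rule mat_trace_adj_char_coeff[OF A, symmetric])
    also have "\<dots> = mat_trace (?c (Suc k) \<cdot>\<^sub>m 1\<^sub>m n + adj_char_coeff A (Suc k) * A)"
      unfolding adj_char_coeff_Suc[OF A, of k] ..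
    also have "\<dots> = of_nat n * ?c (Suc k)"
      using trace_adj_mult[of "Suc k"]
      by (subst mat_trace_add[of _ n]) (use A in \<open>auto simp: mat_trace_smult_one\<close>)
    finally show ?thesis .
  qed
  have coeff_Suc: "?c (Suc k) = 0" if "Suc k \<noteq> n" for k
  proof (cases "Suc k < n")
    case True
    then have "of_nat (n - Suc k) * ?c (Suc k) = 0"
      using scale[of k] by (simp add: of_nat_diff left_diff_distrib)
    from torsion_free[OF _ this] True show ?thesis by simp
  next
    case False
    then have "of_nat (Suc k - n) * ?c (Suc k) = 0"
      using scale[of k] by (simp add: of_nat_diff left_diff_distrib)
    from torsion_free[OF _ this] False that show ?thesis by simp
  qed
  have coeff_0: "?c 0 = 0" if "n \<noteq> 0"
  proof -
    have "- (of_nat n * ?c 0) = mat_trace (adj_char_coeff A 0 * A)"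
      using A by (simp add: adj_char_coeff_0_mult mat_trace_def sum_negf)
    also have "\<dots> = 0"
      by (rule trace_adj_mult)
    finally have "of_nat n * ?c 0 = 0" by simp
    from torsion_free[OF that this] show ?thesis .
  qed
  have "?c n = 1"
    using degree_monic_char_poly[OF A] by simp
  moreover have "?c k = 0" if "k \<noteq> n"
    using that coeff_Suc coeff_0 by (cases k) simp_all
  ultimately show "?c k = coeff (monom 1 n) k"
    by (cases "k = n") simp_all
qed

lemma pow_eq_0_if_char_poly_eq_monom:
  fixes A :: "'a::comm_ring_1 mat"
  assumes A: "A \<in> carrier_mat n n" and char: "char_poly A = monom 1 n"
  shows "A ^\<^sub>m n = 0\<^sub>m n n"
proof (cases n)
  case 0
  then show ?thesis using A by (intro eq_matI) auto
next
  case (Suc n')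
  let ?B = "adj_char_coeff A"
  have zero_smult_add: "0 \<cdot>\<^sub>m 1\<^sub>m n + M = M" if "M \<in> carrier_mat n n" for M :: "'a mat"
    using that by (intro eq_matI) auto
  have one_add_zero: "1 \<cdot>\<^sub>m 1\<^sub>m n + 0\<^sub>m n n = (1\<^sub>m n :: 'a mat)"
    by (intro eq_matI) auto
  have step: "?B k = ?B (Suc k) * A" if "Suc k \<noteq> n" for k
    using adj_char_coeff_Suc[OF A, of k] that A
      zero_smult_add[OF mult_carrier_mat[OF adj_char_coeff_carrier[OF A] A]]
    by (simp add: char)
  have top: "?B n' = 1\<^sub>m n"
    using adj_char_coeff_Suc[OF A, of n'] adj_char_coeff_eq_0[OF A, of n] one_add_zero Suc A
    by (simp add: char)
  have "?B (n' - j) = A ^\<^sub>m j" if "j \<le> n'" for j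
    using that
  proof (induction j)
    case 0
    then show ?case using top A by simp
  next
    case (Suc j)
    then have "?B (n' - Suc j) = ?B (n' - j) * A"
      using step[of "n' - Suc j"] \<open>n = Suc n'\<close> by (simp add: Suc_diff_Suc)
    then show ?case using Suc by simp
  qed
  from this[of n'] have "A ^\<^sub>m n = ?B 0 * A"
    using Suc by simp
  also have "\<dots> = 0\<^sub>m n n"
    using adj_char_coeff_0_mult[OF A] Suc by (auto simp: char intro!: eq_matI)
  finally show ?thesis .
qed

theorem pow_eq_0_if_traces_vanish:
  fixes A :: "'a::comm_ring_1 mat"
  assumes A: "A \<in> carrier_mat n n"
    and torsion_free: "\<And>m (x::'a). m \<noteq> 0 \<Longrightarrow> of_nat m * x = 0 \<Longrightarrow> x = 0"
    and traces: "\<And>m. m \<ge> 1 \<Longrightarrow> mat_trace (A ^\<^sub>m m) = 0"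
  shows "A ^\<^sub>m n = 0\<^sub>m n n"
  using char_poly_eq_monom_if_traces_vanish[OF A torsion_free traces]
  by (rule pow_eq_0_if_char_poly_eq_monom[OF A])

section \<open>The exterior algebra\<close>

definition inversions :: "'g::linorder set \<Rightarrow> 'g set \<Rightarrow> ('g \<times> 'g) set" where
  "inversions S T = {(s, t). s \<in> S \<and> t \<in> T \<and> t < s}"

lemma ext_sign_inversions: "ext_sign S T = (-1) ^ card (inversions S T)"
  by (simp add: ext_sign_def inversions_def)

lemma finite_inversions: "finite S \<Longrightarrow> finite T \<Longrightarrow> finite (inversions S T)"
  by (rule finite_subset[of _ "S \<times> T"]) (auto simp: inversions_def)

lemma ext_sign_cocycle:
  assumes U: "finite U" and RS: "R \<subseteq> S" and SU: "S \<subseteq> U"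
  shows "ext_sign S (U - S) * ext_sign R (S - R) = ext_sign R (U - R) * ext_sign (S - R) (U - S)"
proof -
  have fin: "finite (inversions A B)" if "A \<subseteq> U" "B \<subseteq> U" for A B
    using U that by (intro finite_inversions) (auto intro: finite_subset)
  have RU: "R \<subseteq> U" and SRU: "S - R \<subseteq> U" using RS SU by blast+
  have "inversions S (U - S) = inversions R (U - S) \<union> inversions (S - R) (U - S)"
    and "inversions R (U - S) \<inter> inversions (S - R) (U - S) = {}"
    using RS by (auto simp: inversions_def)
  then have c1:
    "card (inversions S (U - S)) = card (inversions R (U - S)) + card (inversions (S - R) (U - S))"
    using RU SRU fin[of R "U - S"] fin[of "S - R" "U - S"] by (simp add: card_Un_disjoint)
  have "inversions R (U - R) = inversions R (S - R) \<union> inversions R (U - S)"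
    and "inversions R (S - R) \<inter> inversions R (U - S) = {}"
    using RS SU by (auto simp: inversions_def)
  then have c2:
    "card (inversions R (U - R)) = card (inversions R (S - R)) + card (inversions R (U - S))"
    using RU SRU fin[of R "S - R"] fin[of R "U - S"] by (simp add: card_Un_disjoint)
  show ?thesis
    unfolding ext_sign_inversions power_add[symmetric] c1 c2 by (simp only: add_ac)
qed

lemma ext_mult_assoc: "ext_mult (ext_mult a b) c = ext_mult a (ext_mult b c)"
proof
  fix U :: "'a set"
  show "ext_mult (ext_mult a b) c U = ext_mult a (ext_mult b c) U"
  proof (cases "finite U")
    case False
    then show ?thesis by (simp add: ext_mult_def)
  next
    case True
    define F where
      "F R S = ext_sign S (U - S) * ext_sign R (S - R) * a R * b (S - R) * c (U - S)" for R S
    have "ext_mult (ext_mult a b) c U = (\<Sum>S\<in>Pow U. \<Sum>R\<in>Pow S. F R S)"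
      unfolding ext_mult_def F_def by (simp add: sum_distrib_left sum_distrib_right algebra_simps)
    also have "\<dots> = (\<Sum>S\<in>Pow U. \<Sum>R\<in>{R\<in>Pow U. R \<subseteq> S}. F R S)"
      by (intro sum.cong refl) auto
    also have "\<dots> = (\<Sum>R\<in>Pow U. \<Sum>S\<in>{S\<in>Pow U. R \<subseteq> S}. F R S)"
      using True by (intro sum.swap_restrict) simp_all
    also have "\<dots> = (\<Sum>R\<in>Pow U. \<Sum>T\<in>Pow (U - R). F R (R \<union> T))"
    proof (rule sum.cong[OF refl])
      fix R assume "R \<in> Pow U"
      then show "(\<Sum>S\<in>{S\<in>Pow U. R \<subseteq> S}. F R S) = (\<Sum>T\<in>Pow (U - R). F R (R \<union> T))"
        by (intro sum.reindex_bij_witness[of _ "\<lambda>T. R \<union> T" "\<lambda>S. S - R"]) (auto simp: Un_absorb1)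
    qed
    also have "\<dots> = (\<Sum>R\<in>Pow U. \<Sum>T\<in>Pow (U - R).
        ext_sign R (U - R) * a R * (ext_sign T (U - R - T) * b T * c (U - R - T)))"
    proof (intro sum.cong refl)
      fix R T assume "R \<in> Pow U" and "T \<in> Pow (U - R)"
      then have R: "R \<subseteq> U" and T: "T \<subseteq> U - R" and TU: "T \<subseteq> U" by auto
      then have "R \<union> T - R = T" and "U - (R \<union> T) = U - R - T" by auto
      with ext_sign_cocycle[OF True, of R "R \<union> T"] R TU
      show "F R (R \<union> T) = ext_sign R (U - R) * a R * (ext_sign T (U - R - T) * b T * c (U - R - T))"
        by (simp add: F_def algebra_simps)
    qed
    also have "\<dots> = ext_mult a (ext_mult b c) U"
      by (simp add: ext_mult_def sum_distrib_left algebra_simps)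
    finally show ?thesis .
  qed
qed

lemma ext_sign_swap:
  assumes S: "finite S" and T: "finite T" and disj: "S \<inter> T = {}"
  shows "ext_sign S T * ext_sign T S = (-1) ^ (card S * card T)"
proof -
  have fin: "finite (inversions S T)" "finite (prod.swap ` inversions T S)"
    using S T by (simp_all add: finite_inversions)
  have "S \<times> T = inversions S T \<union> prod.swap ` inversions T S"
    using disj by (auto simp: inversions_def image_iff)
  moreover have "inversions S T \<inter> prod.swap ` inversions T S = {}"
    by (auto simp: inversions_def)
  moreover have "card (prod.swap ` inversions T S) = card (inversions T S)"
    by (rule card_image) simp
  ultimately have "card S * card T = card (inversions S T) + card (inversions T S)"
    using card_Un_disjoint[OF fin] by (simp add: card_cartesian_product[symmetric])
  then show ?thesis
    unfolding ext_sign_inversions power_add[symmetric] by (simp only:)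
qed

lemma ext_mult_commute_sign:
  assumes "\<And>S T. a S \<noteq> 0 \<Longrightarrow> b T \<noteq> 0 \<Longrightarrow> (-1) ^ (card S * card T) = \<epsilon>"
  shows "ext_mult a b U = \<epsilon> * ext_mult b a U"
proof (cases "finite U")
  case True
  have "ext_mult a b U = (\<Sum>T\<in>Pow U. ext_sign (U - T) T * a (U - T) * b T)"
    unfolding ext_mult_def
    by (rule sum.reindex_bij_witness[of _ "\<lambda>T. U - T" "\<lambda>T. U - T"]) (auto simp: double_diff)
  also have "\<dots> = (\<Sum>T\<in>Pow U. \<epsilon> * (ext_sign T (U - T) * b T * a (U - T)))"
  proof (intro sum.cong refl)
    fix T assume "T \<in> Pow U"
    then have fin: "finite T" "finite (U - T)" using True finite_subset by auto
    have "ext_sign (U - T) T = ext_sign (U - T) T * (ext_sign T (U - T) * ext_sign T (U - T))"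
      by (simp add: ext_sign_def flip: power_add)
    also have "\<dots> = (ext_sign (U - T) T * ext_sign T (U - T)) * ext_sign T (U - T)"
      by (simp only: mult.assoc)
    also have "\<dots> = (-1) ^ (card (U - T) * card T) * ext_sign T (U - T)"
      using fin by (subst ext_sign_swap) auto
    finally show "ext_sign (U - T) T * a (U - T) * b T = \<epsilon> * (ext_sign T (U - T) * b T * a (U - T))"
      using assms[of "U - T" T] by (cases "a (U - T) = 0 \<or> b T = 0") auto
  qed
  also have "\<dots> = \<epsilon> * ext_mult b a U"
    by (simp add: ext_mult_def sum_distrib_left)
  finally show ?thesis .
qed (simp add: ext_mult_def)

definition ext_homogeneous :: "nat \<Rightarrow> 'g ext \<Rightarrow> bool" where
  "ext_homogeneous p a \<longleftrightarrow> (\<forall>U. a U \<noteq> 0 \<longrightarrow> finite U \<and> card U = p)"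

definition ext_even :: "'g ext \<Rightarrow> bool" where
  "ext_even a \<longleftrightarrow> (\<forall>U. a U \<noteq> 0 \<longrightarrow> finite U \<and> even (card U))"

lemma ext_mult_anticommute:
  "ext_homogeneous p a \<Longrightarrow> ext_homogeneous q b \<Longrightarrow> ext_mult a b U = (-1) ^ (p * q) * ext_mult b a U"
  by (rule ext_mult_commute_sign) (simp add: ext_homogeneous_def)

lemma ext_mult_commute_even: "ext_even a \<Longrightarrow> ext_even b \<Longrightarrow> ext_mult a b = ext_mult b a"
  by (rule ext, subst ext_mult_commute_sign[where \<epsilon> = 1]) (auto simp: ext_even_def)

lemma ext_mult_nonzero_split:
  assumes "ext_mult a b U \<noteq> 0"
  obtains S where "finite U" "S \<subseteq> U" "card U = card S + card (U - S)" "a S \<noteq> 0" "b (U - S) \<noteq> 0"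
proof -
  have U: "finite U"
    using assms unfolding ext_mult_def by (metis finite_Pow_iff sum.infinite)
  obtain S where "S \<subseteq> U" "a S \<noteq> 0" "b (U - S) \<noteq> 0"
    using assms unfolding ext_mult_def by (auto elim!: sum.not_neutral_contains_not_neutral)
  moreover from U \<open>S \<subseteq> U\<close> have "card U = card S + card (U - S)"
    by (metis card_Diff_subset card_mono finite_subset le_add_diff_inverse)
  ultimately show ?thesis using U that by blast
qed

lemma ext_homogeneous_mult:
  assumes a: "ext_homogeneous p a" and b: "ext_homogeneous q b"
  shows "ext_homogeneous (p + q) (ext_mult a b)"
  unfolding ext_homogeneous_def
proof (intro allI impI)
  fix U assume "ext_mult a b U \<noteq> 0"
  then obtain S where "finite U" "card U = card S + card (U - S)" "a S \<noteq> 0" "b (U - S) \<noteq> 0"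
    by (rule ext_mult_nonzero_split)
  with a b show "finite U \<and> card U = p + q"
    by (simp add: ext_homogeneous_def)
qed

lemma ext_even_mult:
  assumes a: "ext_even a" and b: "ext_even b"
  shows "ext_even (ext_mult a b)"
  unfolding ext_even_def
proof (intro allI impI)
  fix U assume "ext_mult a b U \<noteq> 0"
  then obtain S where "finite U" "card U = card S + card (U - S)" "a S \<noteq> 0" "b (U - S) \<noteq> 0"
    by (rule ext_mult_nonzero_split)
  with a b show "finite U \<and> even (card U)"
    by (simp add: ext_even_def)
qed

lemma ext_even_if_homogeneous: "ext_homogeneous p a \<Longrightarrow> even p \<Longrightarrow> ext_even a"
  by (auto simp: ext_homogeneous_def ext_even_def)

lemma ext_one_mult: "ext_mult ext_one a U = (if finite U then a U else 0)"
proof (cases "finite U")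
  case True
  have "ext_mult ext_one a U = (\<Sum>S\<in>Pow U. if S = {} then ext_sign S (U - S) * a (U - S) else 0)"
    unfolding ext_mult_def ext_one_def by (intro sum.cong) auto
  with True show ?thesis by (simp add: ext_sign_def)
qed (simp add: ext_mult_def)

lemma ext_mult_one: "ext_mult a ext_one U = (if finite U then a U else 0)"
proof (cases "finite U")
  case True
  have "ext_mult a ext_one U = (\<Sum>S\<in>Pow U. if S = U then ext_sign S (U - S) * a S else 0)"
    unfolding ext_mult_def ext_one_def by (intro sum.cong) auto
  with True show ?thesis by (simp add: ext_sign_def)
qed (simp add: ext_mult_def)

lemma ext_mult_sum_left:
  "ext_mult (\<lambda>U. \<Sum>j\<in>J. f j U) b U = (\<Sum>j\<in>J. ext_mult (f j) b U)"
  unfolding ext_mult_def by (simp add: sum_distrib_left sum_distrib_right sum.swap[of _ J])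

lemma ext_mult_sum_right:
  "ext_mult a (\<lambda>U. \<Sum>j\<in>J. f j U) U = (\<Sum>j\<in>J. ext_mult a (f j) U)"
  unfolding ext_mult_def by (simp add: sum_distrib_left sum_distrib_right sum.swap[of _ J])

section \<open>The even subalgebra\<close>

lemma ext_even_zero: "ext_even ext_zero"
  by (simp add: ext_even_def ext_zero_def)

lemma ext_even_one: "ext_even ext_one"
  by (simp add: ext_even_def ext_one_def)

lemma ext_even_add: "ext_even a \<Longrightarrow> ext_even b \<Longrightarrow> ext_even (ext_add a b)"
  unfolding ext_even_def ext_add_def by (metis add.right_neutral)

lemma ext_even_vanishes_infinite: "ext_even a \<Longrightarrow> infinite U \<Longrightarrow> a U = 0"
  by (auto simp: ext_even_def)

typedef (overloaded) 'g even_ext = "{a :: 'g::linorder ext. ext_even a}"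
  using ext_even_zero by blast

setup_lifting type_definition_even_ext

instantiation even_ext :: (linorder) comm_ring_1
begin

lift_definition zero_even_ext :: "'a even_ext" is ext_zero
  by (rule ext_even_zero)

lift_definition one_even_ext :: "'a even_ext" is ext_one
  by (rule ext_even_one)

lift_definition plus_even_ext :: "'a even_ext \<Rightarrow> 'a even_ext \<Rightarrow> 'a even_ext" is ext_add
  by (rule ext_even_add)

lift_definition uminus_even_ext :: "'a even_ext \<Rightarrow> 'a even_ext" is "\<lambda>a U. - a U"
  by (simp add: ext_even_def)

lift_definition minus_even_ext :: "'a even_ext \<Rightarrow> 'a even_ext \<Rightarrow> 'a even_ext" is "\<lambda>a b U. a U - b U"
  unfolding ext_even_def by (metis diff_self)

lift_definition times_even_ext :: "'a even_ext \<Rightarrow> 'a even_ext \<Rightarrow> 'a even_ext" is ext_mult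
  by (rule ext_even_mult)

instance
proof
  fix a b c :: "'a even_ext"
  show "a * b * c = a * (b * c)"
    by transfer (rule ext_mult_assoc)
  show "a * b = b * a"
    by transfer (rule ext_mult_commute_even)
  show "1 * a = a"
    by transfer (auto simp: ext_one_mult ext_even_vanishes_infinite)
  show "(a + b) * c = a * c + b * c"
    by transfer (auto simp: ext_mult_def ext_add_def sum.distrib algebra_simps)
  show "a + b + c = a + (b + c)"
    by transfer (auto simp: ext_add_def)
  show "a + b = b + a"
    by transfer (auto simp: ext_add_def)
  show "0 + a = a"
    by transfer (auto simp: ext_add_def ext_zero_def)
  show "- a + a = 0"
    by transfer (auto simp: ext_add_def ext_zero_def)
  show "a - b = a + - b"
    by transfer (auto simp: ext_add_def)
  show "(0::'a even_ext) \<noteq> 1"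
    by transfer (auto simp: ext_zero_def ext_one_def fun_eq_iff)
qed

end

lemma Rep_even_ext_sum: "Rep_even_ext (\<Sum>j\<in>J. f j) U = (\<Sum>j\<in>J. Rep_even_ext (f j) U)"
  by (induction J rule: infinite_finite_induct)
    (simp_all add: zero_even_ext.rep_eq plus_even_ext.rep_eq ext_zero_def ext_add_def)

lemma Rep_even_ext_of_nat_mult: "Rep_even_ext (of_nat m * x) U = of_nat m * Rep_even_ext x U"
  by (induction m)
    (simp_all add: zero_even_ext.rep_eq plus_even_ext.rep_eq ext_zero_def ext_add_def distrib_right)

lemma even_ext_torsion_free:
  fixes x :: "'g::linorder even_ext"
  assumes "m \<noteq> 0" "of_nat m * x = 0"
  shows "x = 0"
proof -
  have "of_nat m * Rep_even_ext x U = 0" for U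
    using assms(2) by (metis Rep_even_ext_of_nat_mult zero_even_ext.rep_eq ext_zero_def)
  with assms(1) show ?thesis
    by transfer (simp add: ext_zero_def fun_eq_iff)
qed

section \<open>Matrices over the exterior algebra\<close>

lemma ext_mat_mult_eq_sum:
  "ext_mat_mult n A B i k = (\<lambda>U. \<Sum>j<n. ext_mult (A i j) (B j k) U)"
proof -
  have "foldr ext_add (map f xs) ext_zero = (\<lambda>U. \<Sum>x\<leftarrow>xs. f x U)" for f :: "nat \<Rightarrow> 'a ext" and xs
    by (induction xs) (simp_all add: ext_add_def ext_zero_def)
  then show ?thesis
    by (simp add: ext_mat_mult_def interv_sum_list_conv_sum_set_nat atLeast0LessThan)
qed

lemma ext_mat_mult_cong:
  "(\<And>j. j < n \<Longrightarrow> A i j = A' i j) \<Longrightarrow> (\<And>j. j < n \<Longrightarrow> B j l = B' j l) \<Longrightarrow>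
    ext_mat_mult n A B i l = ext_mat_mult n A' B' i l"
  unfolding ext_mat_mult_eq_sum by (intro ext sum.cong) auto

lemma ext_mat_mult_assoc:
  "ext_mat_mult n (ext_mat_mult n A B) C i l = ext_mat_mult n A (ext_mat_mult n B C) i l"
proof -
  have "ext_mat_mult n (ext_mat_mult n A B) C i l =
      (\<lambda>U. \<Sum>k<n. \<Sum>j<n. ext_mult (ext_mult (A i j) (B j k)) (C k l) U)"
    by (simp add: ext_mat_mult_eq_sum ext_mult_sum_left)
  also have "\<dots> = (\<lambda>U. \<Sum>j<n. \<Sum>k<n. ext_mult (A i j) (ext_mult (B j k) (C k l)) U)"
    unfolding ext_mult_assoc by (rule ext) (rule sum.swap)
  also have "\<dots> = ext_mat_mult n A (ext_mat_mult n B C) i l"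
    by (simp add: ext_mat_mult_eq_sum ext_mult_sum_right)
  finally show ?thesis .
qed

lemma ext_homogeneous_vanishes_infinite: "ext_homogeneous p a \<Longrightarrow> infinite U \<Longrightarrow> a U = 0"
  by (auto simp: ext_homogeneous_def)

lemma ext_homogeneous_sum:
  "(\<And>j. j \<in> J \<Longrightarrow> ext_homogeneous p (f j)) \<Longrightarrow> ext_homogeneous p (\<lambda>U. \<Sum>j\<in>J. f j U)"
  unfolding ext_homogeneous_def by (metis sum.not_neutral_contains_not_neutral)

lemma ext_homogeneous_ext_mat_pow:
  assumes "\<And>i j. ext_homogeneous p (A i j)"
  shows "ext_homogeneous (k * p) (ext_mat_pow n A k i j)"
proof (induction k arbitrary: i j)
  case 0
  then show ?case by (simp add: ext_mat_one_def ext_homogeneous_def ext_one_def ext_zero_def)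
next
  case (Suc k)
  then show ?case
    unfolding ext_mat_pow.simps ext_mat_mult_eq_sum
    by (intro ext_homogeneous_sum)
      (use ext_homogeneous_mult[OF Suc.IH assms] in \<open>simp add: add.commute\<close>)
qed

lemma ext_mult_zero_right: "ext_mult a ext_zero U = 0"
  by (simp add: ext_mult_def ext_zero_def)

lemma ext_mult_zero_left: "ext_mult ext_zero b U = 0"
  by (simp add: ext_mult_def ext_zero_def)

lemma ext_mat_mult_one_right:
  assumes "\<And>j U. j < n \<Longrightarrow> infinite U \<Longrightarrow> A i j U = 0" and "l < n"
  shows "ext_mat_mult n A ext_mat_one i l = A i l"
proof -
  have "ext_mat_mult n A ext_mat_one i l = (\<lambda>U. \<Sum>j<n. if j = l then A i l U else 0)"
    unfolding ext_mat_mult_eq_sum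
    by (intro ext sum.cong) (auto simp: ext_mat_one_def ext_mult_one ext_mult_zero_right assms)
  with assms(2) show ?thesis by simp
qed

lemma ext_mat_pow_add:
  assumes A: "\<And>i j. ext_homogeneous p (A i j)" and "i < n" "l < n"
  shows "ext_mat_pow n A (k + m) i l = ext_mat_mult n (ext_mat_pow n A k) (ext_mat_pow n A m) i l"
  using assms(2,3)
proof (induction m arbitrary: l)
  case 0
  then show ?case
    by (simp add: ext_mat_mult_one_right
        ext_homogeneous_vanishes_infinite[OF ext_homogeneous_ext_mat_pow[OF A]])
next
  case (Suc m)
  have "ext_mat_pow n A (k + Suc m) i l = ext_mat_mult n (ext_mat_pow n A (k + m)) A i l"
    by simp
  also have "\<dots> = ext_mat_mult n (ext_mat_mult n (ext_mat_pow n A k) (ext_mat_pow n A m)) A i l"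
    using Suc by (intro ext_mat_mult_cong) simp_all
  also have "\<dots> = ext_mat_mult n (ext_mat_pow n A k) (ext_mat_pow n A (Suc m)) i l"
    by (simp add: ext_mat_mult_assoc)
  finally show ?case .
qed

lemma ext_mat_mult_one_left:
  assumes "\<And>j U. j < n \<Longrightarrow> infinite U \<Longrightarrow> A j l U = 0" and "i < n"
  shows "ext_mat_mult n ext_mat_one A i l = A i l"
proof -
  have "ext_mat_mult n ext_mat_one A i l = (\<lambda>U. \<Sum>j<n. if j = i then A i l U else 0)"
    unfolding ext_mat_mult_eq_sum
    by (intro ext sum.cong) (auto simp: ext_mat_one_def ext_one_mult ext_mult_zero_left assms)
  with assms(2) show ?thesis by simp
qed

lemma ext_mat_pow_Suc_left:
  assumes A: "\<And>i j. ext_homogeneous p (A i j)" and "i < n" "l < n"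
  shows "ext_mat_pow n A (Suc k) i l = ext_mat_mult n A (ext_mat_pow n A k) i l"
proof -
  have "ext_mat_pow n A (1 + k) i l = ext_mat_mult n (ext_mat_pow n A 1) (ext_mat_pow n A k) i l"
    by (rule ext_mat_pow_add[OF A assms(2,3)])
  also have "\<dots> = ext_mat_mult n A (ext_mat_pow n A k) i l"
    using assms(2) by (intro ext_mat_mult_cong)
      (simp_all add: ext_mat_mult_one_left ext_homogeneous_vanishes_infinite[OF A])
  finally show ?thesis by simp
qed

text \<open>For entries of odd degree the trace of an even power is its own negative: moving the
  last factor of \<open>tr (A\<^sup>m A)\<close> to the front gives \<open>tr (A A\<^sup>m)\<close>, and for odd \<open>m\<close> this costs
  a sign because both factors have odd degree.\<close>

lemma ext_mat_pow_even_trace_eq_0: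
  assumes A: "\<And>i j. ext_homogeneous p (A i j)" and "odd p" and "odd m"
  shows "(\<Sum>i<n. ext_mat_pow n A (Suc m) i i U) = 0"
proof -
  let ?T = "\<Sum>i<n. ext_mat_pow n A (Suc m) i i U"
  have "?T = (\<Sum>i<n. \<Sum>j<n. ext_mult (ext_mat_pow n A m i j) (A j i) U)"
    by (simp add: ext_mat_mult_eq_sum)
  also have "\<dots> = (\<Sum>i<n. \<Sum>j<n. - ext_mult (A j i) (ext_mat_pow n A m i j) U)"
    using \<open>odd p\<close> \<open>odd m\<close>
    by (intro sum.cong refl)
      (simp add: ext_mult_anticommute[OF ext_homogeneous_ext_mat_pow[OF A] A])
  also have "\<dots> = - (\<Sum>j<n. \<Sum>i<n. ext_mult (A j i) (ext_mat_pow n A m i j) U)"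
    by (subst sum.swap) (simp add: sum_negf)
  also have "\<dots> = - ?T"
    by (simp add: ext_mat_pow_Suc_left[OF A] ext_mat_mult_eq_sum del: ext_mat_pow.simps)
  finally show ?thesis by simp
qed

definition even_ext_mat :: "nat \<Rightarrow> (nat \<Rightarrow> nat \<Rightarrow> 'g::linorder ext) \<Rightarrow> 'g even_ext mat" where
  "even_ext_mat n A = mat n n (\<lambda>(i, j). Abs_even_ext (A i j))"

lemma even_ext_mat_one: "even_ext_mat n ext_mat_one = 1\<^sub>m n"
  by (auto simp: even_ext_mat_def ext_mat_one_def zero_even_ext_def one_even_ext_def
      intro!: eq_matI)

lemma even_ext_mat_mult:
  assumes "\<And>i j. ext_even (A i j)" and "\<And>i j. ext_even (B i j)"
  shows "even_ext_mat n (ext_mat_mult n A B) = even_ext_mat n A * even_ext_mat n B"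
proof (rule eq_matI)
  fix i l assume "i < dim_row (even_ext_mat n A * even_ext_mat n B)"
    and "l < dim_col (even_ext_mat n A * even_ext_mat n B)"
  then have i: "i < n" and l: "l < n" by (simp_all add: even_ext_mat_def)
  have prod: "Rep_even_ext ((even_ext_mat n A * even_ext_mat n B) $$ (i, l)) =
      (\<lambda>U. \<Sum>j<n. ext_mult (A i j) (B j l) U)"
    using i l assms
    by (simp add: even_ext_mat_def scalar_prod_def atLeast0LessThan Rep_even_ext_sum
        times_even_ext.rep_eq Abs_even_ext_inverse fun_eq_iff)
  then show "even_ext_mat n (ext_mat_mult n A B) $$ (i, l) =
      (even_ext_mat n A * even_ext_mat n B) $$ (i, l)"
    using i l
    by (simp add: even_ext_mat_def ext_mat_mult_eq_sum flip: prod) (simp add: Rep_even_ext_inverse)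
qed (simp_all add: even_ext_mat_def)

lemma Rep_mat_trace_even_ext_mat:
  assumes "\<And>i. ext_even (A i i)"
  shows "Rep_even_ext (mat_trace (even_ext_mat n A)) U = (\<Sum>i<n. A i i U)"
  using assms by (simp add: mat_trace_def even_ext_mat_def Rep_even_ext_sum Abs_even_ext_inverse)

lemma ext_even_ext_mat_pow_even:
  "(\<And>i j. ext_homogeneous p (A i j)) \<Longrightarrow> ext_even (ext_mat_pow n A (2 * m) i j)"
  by (rule ext_even_if_homogeneous[OF ext_homogeneous_ext_mat_pow]) simp_all

lemma even_ext_mat_pow_square:
  assumes A: "\<And>i j. ext_homogeneous p (A i j)"
  shows "even_ext_mat n (ext_mat_pow n A 2) ^\<^sub>m m = even_ext_mat n (ext_mat_pow n A (2 * m))"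
proof (induction m)
  case 0
  then show ?case by (simp add: even_ext_mat_one) (simp add: even_ext_mat_def)
next
  case (Suc m)
  let ?P = "ext_mat_pow n A"
  have square_even: "ext_even (?P 2 i j)" for i j
    using ext_even_ext_mat_pow_even[OF A, where m = 1] by simp
  have "even_ext_mat n (?P 2) ^\<^sub>m Suc m = even_ext_mat n (?P (2 * m)) * even_ext_mat n (?P 2)"
    by (simp add: Suc.IH del: ext_mat_pow.simps)
  also have "\<dots> = even_ext_mat n (ext_mat_mult n (?P (2 * m)) (?P 2))"
    using square_even by (intro even_ext_mat_mult[symmetric] ext_even_ext_mat_pow_even[OF A])
  also have "\<dots> = even_ext_mat n (?P (2 * m + 2))"
    unfolding even_ext_mat_def
    using ext_mat_pow_add[OF A, where k = "2 * m" and m = 2, unfolded add_2_eq_Suc']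
    by (intro eq_matI) (simp_all del: ext_mat_pow.simps)
  finally show ?case by simp
qed

lemma mat_trace_even_ext_mat_pow_square:
  assumes A: "\<And>i j. ext_homogeneous p (A i j)" and "odd p" and "m \<ge> 1"
  shows "mat_trace (even_ext_mat n (ext_mat_pow n A 2) ^\<^sub>m m) = 0"
proof -
  obtain k where "m = Suc k" using \<open>m \<ge> 1\<close> by (cases m) auto
  then have "Rep_even_ext (mat_trace (even_ext_mat n (ext_mat_pow n A 2) ^\<^sub>m m)) = Rep_even_ext 0"
    unfolding even_ext_mat_pow_square[OF A]
      Rep_mat_trace_even_ext_mat[OF ext_even_ext_mat_pow_even[OF A]]
    using ext_mat_pow_even_trace_eq_0[OF A \<open>odd p\<close>, of "Suc (2 * k)"]
    by (simp add: fun_eq_iff zero_even_ext.rep_eq ext_zero_def)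
  then show ?thesis by (simp add: Rep_even_ext_inject)
qed

lemma ext_eq_0_if_even_ext_mat_eq_0:
  assumes "even_ext_mat n A = 0\<^sub>m n n" and "ext_even (A i j)" and "i < n" "j < n"
  shows "A i j = ext_zero"
proof -
  have "Abs_even_ext (A i j) = 0"
    using arg_cong[OF assms(1), of "\<lambda>M. M $$ (i, j)"] assms(3,4) by (simp add: even_ext_mat_def)
  then show ?thesis
    using assms(2) by (metis Abs_even_ext_inverse mem_Collect_eq zero_even_ext.rep_eq)
qed

lemma ext_homogeneous_generic_X: "ext_homogeneous 1 (generic_X i j)"
  by (simp add: ext_homogeneous_def generic_X_def ext_gen_def)

theorem corollary2p5:
  fixes n :: nat
  shows "\<forall>i<n. \<forall>j<n. ext_mat_pow n generic_X (2 * n) i j = ext_zero"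
proof (intro allI impI)
  fix i j assume "i < n" "j < n"
  let ?Y = "even_ext_mat n (ext_mat_pow n generic_X 2)"
  have "?Y ^\<^sub>m n = 0\<^sub>m n n"
    by (rule pow_eq_0_if_traces_vanish[OF _ even_ext_torsion_free
          mat_trace_even_ext_mat_pow_square[OF ext_homogeneous_generic_X odd_one]])
      (simp add: even_ext_mat_def)
  then have "even_ext_mat n (ext_mat_pow n generic_X (2 * n)) = 0\<^sub>m n n"
    by (simp only: even_ext_mat_pow_square[OF ext_homogeneous_generic_X])
  then show "ext_mat_pow n generic_X (2 * n) i j = ext_zero"
    using \<open>i < n\<close> \<open>j < n\<close>
    by (intro ext_eq_0_if_even_ext_mat_eq_0 ext_even_ext_mat_pow_even[OF ext_homogeneous_generic_X])
qed

end
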